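(* Let $m\in\mathbb{N}$, $\boldsymbol{\sigma}\in\{0,1\}^m$, and let $\beta=\frac{\beta_1}{2}+\dots+\frac{\beta_m}{2^m}$ be $m$-bit. For $m$-bit $\alpha=\frac{\alpha_1}{2}+\dots+\frac{\alpha_m}{2^m}$ set $\alpha_{m+1}=0$, and let $j_1(u)=j(u;\alpha,\beta,\boldsymbol{\sigma})$ and $j_2(u)=j(u;\alpha,\beta,\boldsymbol{\sigma}^* )$ as defined in the context. Then: (1) For $u_1,u_2\in\{0,\dots,m-1\}$ with $u_1\ne u_2$, $$\sum_{\alpha\in\mathbb{Q}^*(2^m)}(\alpha_{m-u_1}\oplus\alpha_{m+1-j_1(u_1)})(\alpha_{m-u_2}\oplus\alpha_{m+1-j_2(u_2)})=2^{m-2}.$$ (2) For $u\in\{0,\dots,m-1\}$, $$\sum_{\alpha\in\mathbb{Q}^*(2^m)}(\alpha_{m-u}\oplus\alpha_{m+1-j_1(u)})(\alpha_{m-u}\oplus\alpha_{m+1-j_2(u)})=\begin{cases}2^{m-u-1} & \text{if } u\in\{0,1\},\\ 2^{m-u-1}\left(1+\sum_{j=1}^{u-1}2^j\big((\gamma_j\oplus1)\gamma_u+\gamma_j(\gamma_u\oplus1)\big)\right) & \text{if } u\in\{2,\dots,m-1\},\end{cases}$$ where $\gamma_j:=\beta_j\oplus\sigma_j$ for $j\in\{1,\dots,m-1\}$.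
   Context: $\oplus$ denotes addition modulo 2. A real number $\alpha\in[0,1)$ is called $m$-bit if $\alpha\in\mathbb{Q}(2^m):=\{0,\frac1{2^m},\dots,\frac{2^m-1}{2^m}\}$, i.e. $\alpha=\frac{\alpha_1}{2}+\dots+\frac{\alpha_m}{2^m}$ with $\alpha_j\in\{0,1\}$; $\mathbb{Q}^*(2^m):=\mathbb{Q}(2^m)\setminus\{0\}$. For $\boldsymbol{\sigma}=(\sigma_1,\dots,\sigma_m)\in\{0,1\}^m$, $\boldsymbol{\sigma}^*=(\sigma_1\oplus1,\dots,\sigma_m\oplus1)$. For $m$-bit $\alpha,\beta$, a shift $\boldsymbol{\tau}\in\{0,1\}^m$ and $0\le u\le m-1$, define $j(u;\alpha,\beta,\boldsymbol{\tau})=0$ if $u=0$; $j(u;\alpha,\beta,\boldsymbol{\tau})=0$ if $\alpha_{m+1-j}=\beta_j\oplus\tau_j$ for all $j=1,\dots,u$; and otherwise $j(u;\alpha,\beta,\boldsymbol{\tau})=\max\{j\le u:\alpha_{m+1-j}\ne\beta_j\oplus\tau_j\}$. *)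

theory Defs
  imports Complex_Main
begin

definition bxor :: "nat \<Rightarrow> nat \<Rightarrow> nat" (infixl "\<oplus>\<^sub>2" 65) where
  "x \<oplus>\<^sub>2 y = (x + y) mod 2"

definition Qm :: "nat \<Rightarrow> real set" where
  "Qm m = {real k / 2 ^ m | k. k < 2 ^ m}"

definition Qm_star :: "nat \<Rightarrow> real set" where
  "Qm_star m = Qm m - {0}"

(* binary digit: alpha = alpha_1/2 + alpha_2/4 + ...; alpha_i = floor(2^i alpha) mod 2.
   For an m-bit alpha this gives alpha_{m+1} = 0, matching the convention. *)
definition digit :: "real \<Rightarrow> nat \<Rightarrow> nat" where
  "digit a i = nat (\<lfloor>2 ^ i * a\<rfloor> mod 2)"

definition cshift :: "(nat \<Rightarrow> nat) \<Rightarrow> nat \<Rightarrow> nat" where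
  "cshift \<sigma> = (\<lambda>j. \<sigma> j \<oplus>\<^sub>2 1)"

definition jfun :: "nat \<Rightarrow> nat \<Rightarrow> real \<Rightarrow> real \<Rightarrow> (nat \<Rightarrow> nat) \<Rightarrow> nat" where
  "jfun m u a b \<tau> =
     (if u = 0 then 0
      else if (\<forall>j\<in>{1..u}. digit a (m + 1 - j) = digit b j \<oplus>\<^sub>2 \<tau> j) then 0
      else Max {j \<in> {1..u}. digit a (m + 1 - j) \<noteq> digit b j \<oplus>\<^sub>2 \<tau> j})"

end

theory Submission
  imports Defs
begin

text \<open>
  Write \<alpha> = k / 2^m with k < 2^m. Then \<alpha>_(m-u) is bit u of k, and \<alpha>_(m+1-j(u)) is the bit of k at
  the highest position below u where k disagrees with the target bits \<beta>_j \<oplus> \<tau>_j (or 0 if there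
  is none), so both sums are sums over k < 2^m of functions of the binary digits of k.
  Splitting off one bit and using (0 \<oplus> c) + (1 \<oplus> c) = 1, a factor "bit b of k \<oplus> (function of
  the bits below b)" halves the sum; two such factors at different positions give 2^(m-2).
  For equal positions what remains is the number of k < 2^u whose mismatch digits for the targets
  \<gamma> and 1 - \<gamma> agree; splitting off the top bit reduces this to counting the k with a
  prescribed mismatch digit, which satisfies a simple recursion in u.
\<close>

definition nat_bit :: "nat \<Rightarrow> nat \<Rightarrow> nat" where
  "nat_bit k i = k div 2 ^ i mod 2"

lemma nat_bit_less_2: "nat_bit k i < 2"
  by (simp add: nat_bit_def)

lemma nat_bit_mod_pow2:
  assumes "i < n"
  shows "nat_bit (k mod 2 ^ n) i = nat_bit k i"
proof -
  obtain d where n: "n = i + Suc d"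
    using assms by (metis add_Suc_right less_iff_Suc_add add.commute)
  have "k mod 2 ^ n div 2 ^ i = k div 2 ^ i mod 2 ^ Suc d"
    using div_exp_mod_exp_eq[of k i "Suc d"] n by simp
  then show ?thesis
    unfolding nat_bit_def by (simp add: mod_mod_cancel)
qed

lemma sum_lessThan_pow2_Suc:
  fixes f :: "nat \<Rightarrow> 'a::comm_monoid_add"
  shows "(\<Sum>k<2 ^ Suc n. f k) = (\<Sum>k<2 ^ n. f k + f (2 ^ n + k))"
proof -
  have "(\<Sum>k<2 ^ Suc n. f k) = (\<Sum>k<2 ^ n. f k) + (\<Sum>k=2 ^ n..<2 ^ n + 2 ^ n. f k)"
    by (simp add: mult_2 lessThan_atLeast0 sum.atLeastLessThan_concat)
  also have "(\<Sum>k=2 ^ n..<2 ^ n + 2 ^ n. f k) = (\<Sum>k<2 ^ n. f (2 ^ n + k))"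
    using sum.shift_bounds_nat_ivl[of f 0 "2 ^ n" "2 ^ n"] by (simp add: lessThan_atLeast0 add.commute)
  finally show ?thesis by (simp add: sum.distrib)
qed

lemma sum_lessThan_pow2_periodic:
  fixes f :: "nat \<Rightarrow> nat"
  assumes "n \<le> m" and periodic: "\<And>k. f k = f (k mod 2 ^ n)"
  shows "(\<Sum>k<2 ^ m. f k) = 2 ^ (m - n) * (\<Sum>k<2 ^ n. f k)"
  using assms(1)
proof (induction m rule: dec_induct)
  case (step l)
  have shift: "f (2 ^ l + k) = f k" for k
  proof -
    have "(2 ^ l + k) mod 2 ^ n = k mod 2 ^ n"
      using step.hyps by (metis le_imp_power_dvd mod_add_left_eq dvd_imp_mod_0 add_0)
    then show ?thesis
      using periodic[of "2 ^ l + k"] periodic[of k] by (simp only:)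
  qed
  have "(\<Sum>k<2 ^ Suc l. f k) = 2 * (\<Sum>k<2 ^ l. f k)"
    by (simp only: sum_lessThan_pow2_Suc shift sum.distrib mult_2)
  then show ?case
    using step.hyps step.IH by (simp add: Suc_diff_le)
qed simp

lemma sum_lessThan_pow2_by_bit:
  fixes h :: "nat \<Rightarrow> nat \<Rightarrow> nat"
  assumes "u < m"
  shows "(\<Sum>k<2 ^ m. h (k mod 2 ^ u) (nat_bit k u)) = 2 ^ (m - u - 1) * (\<Sum>k<2 ^ u. h k 0 + h k 1)"
proof -
  have "(\<Sum>k<2 ^ m. h (k mod 2 ^ u) (nat_bit k u)) =
      2 ^ (m - Suc u) * (\<Sum>k<2 ^ Suc u. h (k mod 2 ^ u) (nat_bit k u))"
  proof (rule sum_lessThan_pow2_periodic)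
    fix k
    have "k mod 2 ^ Suc u mod 2 ^ u = (k::nat) mod 2 ^ u"
      by (rule mod_mod_cancel) simp
    then show "h (k mod 2 ^ u) (nat_bit k u) =
        h (k mod 2 ^ Suc u mod 2 ^ u) (nat_bit (k mod 2 ^ Suc u) u)"
      by (simp add: nat_bit_mod_pow2 del: power_Suc)
  qed (use assms in simp)
  also have "(\<Sum>k<2 ^ Suc u. h (k mod 2 ^ u) (nat_bit k u)) = (\<Sum>k<2 ^ u. h k 0 + h k 1)"
    by (simp only: sum_lessThan_pow2_Suc) (rule sum.cong, auto simp: nat_bit_def)
  finally show ?thesis by simp
qed

lemma bxor_less_2: "x \<oplus>\<^sub>2 y < 2"
  by (simp add: bxor_def)

lemma bxor_0_add_bxor_1: "(0 \<oplus>\<^sub>2 c) + (1 \<oplus>\<^sub>2 c) = 1"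
  by (simp add: bxor_def) presburger

lemma bxor_0_mult_add_bxor_1_mult:
  "c < 2 \<Longrightarrow> d < 2 \<Longrightarrow> (0 \<oplus>\<^sub>2 c) * (0 \<oplus>\<^sub>2 d) + (1 \<oplus>\<^sub>2 c) * (1 \<oplus>\<^sub>2 d) = of_bool (c = d)"
  by (auto simp: less_2_cases_iff bxor_def)

lemma bxor_1_mult_add_mult_bxor_1:
  "x < 2 \<Longrightarrow> y < 2 \<Longrightarrow> (x \<oplus>\<^sub>2 1) * y + x * (y \<oplus>\<^sub>2 1) = of_bool (x \<noteq> y)"
  by (auto simp: less_2_cases_iff bxor_def)

lemma bxor_cshift: "d \<oplus>\<^sub>2 cshift s j = 1 - (d \<oplus>\<^sub>2 s j)"
  unfolding bxor_def cshift_def by presburger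

lemma sum_mult_bit_bxor:
  fixes F G :: "nat \<Rightarrow> nat"
  assumes "u < m" and "\<And>k. F k = F (k mod 2 ^ u)" and "\<And>k. G k = G (k mod 2 ^ u)"
  shows "(\<Sum>k<2 ^ m. F k * (nat_bit k u \<oplus>\<^sub>2 G k)) = 2 ^ (m - u - 1) * (\<Sum>k<2 ^ u. F k)"
proof -
  have "(\<Sum>k<2 ^ m. F k * (nat_bit k u \<oplus>\<^sub>2 G k)) =
      (\<Sum>k<2 ^ m. (\<lambda>l b. F l * (b \<oplus>\<^sub>2 G l)) (k mod 2 ^ u) (nat_bit k u))"
    using assms(2,3) by metis
  also have "\<dots> = 2 ^ (m - u - 1) * (\<Sum>k<2 ^ u. F k * (0 \<oplus>\<^sub>2 G k) + F k * (1 \<oplus>\<^sub>2 G k))"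
    by (rule sum_lessThan_pow2_by_bit[OF assms(1)])
  finally show ?thesis
    by (simp only: add_mult_distrib2[symmetric] bxor_0_add_bxor_1 mult_1_right)
qed

text \<open>
  For \<alpha> = k / 2^m and t j = \<beta>_j \<oplus> \<tau>_j this is \<alpha>_(m+1-j(u;\<alpha>,\<beta>,\<tau>)).
\<close>
fun mismatch_digit :: "(nat \<Rightarrow> nat) \<Rightarrow> nat \<Rightarrow> nat \<Rightarrow> nat" where
  "mismatch_digit t 0 k = 0"
| "mismatch_digit t (Suc u) k = (if nat_bit k u \<noteq> t (Suc u) then nat_bit k u else mismatch_digit t u k)"

lemma mismatch_digit_less_2: "mismatch_digit t u k < 2"
  by (induction u) (auto simp: nat_bit_less_2)

lemma mismatch_digit_mod_pow2: "u \<le> n \<Longrightarrow> mismatch_digit t u (k mod 2 ^ n) = mismatch_digit t u k"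
  by (induction u) (auto simp: nat_bit_mod_pow2)

lemma mismatch_digit_Suc_add:
  assumes "b < 2" and "k < 2 ^ u"
  shows "mismatch_digit t (Suc u) (b * 2 ^ u + k) = (if b \<noteq> t (Suc u) then b else mismatch_digit t u k)"
proof -
  have bit: "nat_bit (b * 2 ^ u + k) u = b"
    using assms by (simp add: nat_bit_def)
  have low: "mismatch_digit t u (b * 2 ^ u + k) = mismatch_digit t u k"
    using mismatch_digit_mod_pow2[of u u t "b * 2 ^ u + k"] assms by simp
  show ?thesis
    by (simp only: mismatch_digit.simps bit low)
qed

lemma count_mismatch_digit:
  assumes "\<forall>j. t j < 2" and "v < 2"
  shows "(\<Sum>k<2 ^ u. of_bool (mismatch_digit t u k = v) :: nat) =
    of_bool (v = 0) + (\<Sum>j = 1..u. 2 ^ (j - 1) * of_bool (t j \<noteq> v))"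
proof (induction u)
  case (Suc u)
  have "(\<Sum>k<2 ^ Suc u. of_bool (mismatch_digit t (Suc u) k = v) :: nat) =
      (\<Sum>k<2 ^ u. of_bool (mismatch_digit t u k = v) + of_bool (t (Suc u) \<noteq> v))"
    unfolding sum_lessThan_pow2_Suc
  proof (rule sum.cong)
    fix k :: nat assume "k \<in> {..<2 ^ u}"
    then show "of_bool (mismatch_digit t (Suc u) k = v) + of_bool (mismatch_digit t (Suc u) (2 ^ u + k) = v) =
        of_bool (mismatch_digit t u k = v) + (of_bool (t (Suc u) \<noteq> v) :: nat)"
      using mismatch_digit_Suc_add[of 0 k u t] mismatch_digit_Suc_add[of 1 k u t]
        assms(1)[rule_format, of "Suc u"] assms(2)
      by (auto simp: less_2_cases_iff simp del: mismatch_digit.simps)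
  qed simp
  then show ?case
    using Suc.IH by (simp add: sum.distrib)
qed simp

lemma count_mismatch_digits_agree:
  assumes t: "\<forall>j. t j < 2" and t': "\<forall>j. t' j = 1 - t j"
  shows "(\<Sum>k<2 ^ u. of_bool (mismatch_digit t u k = mismatch_digit t' u k) :: nat) =
    1 + (\<Sum>j = 1..u - 1. 2 ^ j * of_bool (t j \<noteq> t u))"
proof (cases u)
  case (Suc w)
  let ?g = "t (Suc w)"
  have t'_less_2: "\<forall>j. t' j < 2"
    using t' by (simp add: le_less_trans[OF diff_le_self])
  have t'_neq: "(t' j \<noteq> t' (Suc w)) = (t j \<noteq> ?g)" for j
    using t[rule_format, of j] t[rule_format, of "Suc w"] t' by auto
  have "(\<Sum>k<2 ^ Suc w. of_bool (mismatch_digit t (Suc w) k = mismatch_digit t' (Suc w) k) :: nat) =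
      (\<Sum>k<2 ^ w. of_bool (mismatch_digit t w k = ?g) + of_bool (mismatch_digit t' w k = t' (Suc w)))"
    unfolding sum_lessThan_pow2_Suc
  proof (rule sum.cong)
    fix k :: nat assume "k \<in> {..<2 ^ w}"
    then show "of_bool (mismatch_digit t (Suc w) k = mismatch_digit t' (Suc w) k) +
        of_bool (mismatch_digit t (Suc w) (2 ^ w + k) = mismatch_digit t' (Suc w) (2 ^ w + k)) =
        of_bool (mismatch_digit t w k = ?g) + (of_bool (mismatch_digit t' w k = t' (Suc w)) :: nat)"
      using mismatch_digit_Suc_add[of 0 k w t] mismatch_digit_Suc_add[of 1 k w t]
        mismatch_digit_Suc_add[of 0 k w t'] mismatch_digit_Suc_add[of 1 k w t']
        t[rule_format, of "Suc w"] t'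
      by (auto simp: less_2_cases_iff simp del: mismatch_digit.simps)
  qed simp
  also have "\<dots> = of_bool (?g = 0) + of_bool (t' (Suc w) = 0) +
      2 * (\<Sum>j = 1..w. 2 ^ (j - 1) * of_bool (t j \<noteq> ?g))"
    using count_mismatch_digit[OF t] count_mismatch_digit[OF t'_less_2] t t'_less_2
    by (simp add: sum.distrib t'_neq)
  also have "of_bool (?g = 0) + of_bool (t' (Suc w) = 0) = (1::nat)"
    using t[rule_format, of "Suc w"] t' by auto
  also have "2 * (\<Sum>j = 1..w. 2 ^ (j - 1) * of_bool (t j \<noteq> ?g)) =
      (\<Sum>j = 1..w. 2 ^ j * of_bool (t j \<noteq> ?g) :: nat)"
    by (simp add: sum_distrib_left mult.assoc[symmetric] power_eq_if)
  finally show ?thesis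
    unfolding Suc diff_Suc_1 .
qed simp

lemma sum_bit_bxor_mismatch_distinct:
  assumes "a \<noteq> b" and "a < m" and "b < m"
  shows "(\<Sum>k<2 ^ m. (nat_bit k a \<oplus>\<^sub>2 mismatch_digit t a k) * (nat_bit k b \<oplus>\<^sub>2 mismatch_digit t' b k)) =
    2 ^ (m - 2)"
proof -
  have ordered: "(\<Sum>k<2 ^ m. (nat_bit k a \<oplus>\<^sub>2 mismatch_digit t a k) * (nat_bit k b \<oplus>\<^sub>2 mismatch_digit t' b k)) =
      2 ^ (m - 2)" if "a < b" and "b < m" for a b t t'
  proof -
    have "(\<Sum>k<2 ^ m. (nat_bit k a \<oplus>\<^sub>2 mismatch_digit t a k) * (nat_bit k b \<oplus>\<^sub>2 mismatch_digit t' b k)) =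
        2 ^ (m - b - 1) * (\<Sum>k<2 ^ b. nat_bit k a \<oplus>\<^sub>2 mismatch_digit t a k)"
      by (rule sum_mult_bit_bxor) (use that in \<open>simp_all add: nat_bit_mod_pow2 mismatch_digit_mod_pow2\<close>)
    also have "(\<Sum>k<2 ^ b. nat_bit k a \<oplus>\<^sub>2 mismatch_digit t a k) = 2 ^ (b - a - 1) * 2 ^ a"
      using sum_mult_bit_bxor[of a b "\<lambda>_. 1" "mismatch_digit t a"] that
      by (simp add: mismatch_digit_mod_pow2)
    also have "2 ^ (m - b - 1) * (2 ^ (b - a - 1) * 2 ^ a) = (2::nat) ^ (m - b - 1 + (b - a - 1) + a)"
      by (simp add: power_add)
    also have "m - b - 1 + (b - a - 1) + a = m - 2"
      using that by simp
    finally show ?thesis .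
  qed
  from assms(1) consider "a < b" | "b < a"
    by linarith
  then show ?thesis
  proof cases
    case 1
    then show ?thesis
      by (rule ordered[OF _ assms(3)])
  next
    case 2
    then show ?thesis
      by (subst mult.commute) (rule ordered[OF _ assms(2)])
  qed
qed

lemma sum_bit_bxor_mismatch_same:
  assumes "u < m"
  shows "(\<Sum>k<2 ^ m. (nat_bit k u \<oplus>\<^sub>2 mismatch_digit t u k) * (nat_bit k u \<oplus>\<^sub>2 mismatch_digit t' u k)) =
    2 ^ (m - u - 1) * (\<Sum>k<2 ^ u. of_bool (mismatch_digit t u k = mismatch_digit t' u k))"
proof -
  have "(\<Sum>k<2 ^ m. (nat_bit k u \<oplus>\<^sub>2 mismatch_digit t u k) * (nat_bit k u \<oplus>\<^sub>2 mismatch_digit t' u k)) =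
      (\<Sum>k<2 ^ m. (\<lambda>l b. (b \<oplus>\<^sub>2 mismatch_digit t u l) * (b \<oplus>\<^sub>2 mismatch_digit t' u l))
        (k mod 2 ^ u) (nat_bit k u))"
    by (simp add: mismatch_digit_mod_pow2)
  also have "\<dots> = 2 ^ (m - u - 1) * (\<Sum>k<2 ^ u. (0 \<oplus>\<^sub>2 mismatch_digit t u k) * (0 \<oplus>\<^sub>2 mismatch_digit t' u k) +
      (1 \<oplus>\<^sub>2 mismatch_digit t u k) * (1 \<oplus>\<^sub>2 mismatch_digit t' u k))"
    by (rule sum_lessThan_pow2_by_bit[OF assms])
  finally show ?thesis
    by (simp only: bxor_0_mult_add_bxor_1_mult mismatch_digit_less_2)
qed

lemma digit_of_nat_div_pow2:
  assumes "i \<le> m"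
  shows "digit (real k / 2 ^ m) i = nat_bit k (m - i)"
proof -
  have "(2::real) ^ m = 2 ^ i * 2 ^ (m - i)"
    using assms by (simp flip: power_add)
  then have "2 ^ i * (real k / 2 ^ m) = real k / real (2 ^ (m - i))"
    by simp
  then have "\<lfloor>2 ^ i * (real k / 2 ^ m)\<rfloor> = int (k div 2 ^ (m - i))"
    by (metis floor_divide_of_nat_eq of_int_of_nat_eq)
  then show ?thesis
    unfolding digit_def nat_bit_def by (simp add: nat_mod_distrib)
qed

lemma digit_of_nat_div_pow2_Suc: "digit (real k / 2 ^ m) (Suc m) = 0"
proof -
  have "2 ^ Suc m * (real k / 2 ^ m) = real (2 * k)"
    by simp
  then show ?thesis
    unfolding digit_def by (simp only: floor_of_nat) simp
qed

lemma jfun_Suc: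
  "jfun m (Suc u) a b \<tau> =
    (if digit a (m - u) \<noteq> digit b (Suc u) \<oplus>\<^sub>2 \<tau> (Suc u) then Suc u else jfun m u a b \<tau>)"
proof (cases "digit a (m - u) \<noteq> digit b (Suc u) \<oplus>\<^sub>2 \<tau> (Suc u)")
  case True
  let ?S = "{j \<in> {1..Suc u}. digit a (m + 1 - j) \<noteq> digit b j \<oplus>\<^sub>2 \<tau> j}"
  have witness: "Suc u \<in> ?S"
    using True by simp
  then have "Max ?S = Suc u"
    by (intro Max_eqI) auto
  moreover have "\<not> (\<forall>j\<in>{1..Suc u}. digit a (m + 1 - j) = digit b j \<oplus>\<^sub>2 \<tau> j)"
    using witness by blast
  ultimately show ?thesis
    using True unfolding jfun_def by (simp only: if_False if_True) simp
next
  case False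
  then have "{j \<in> {1..Suc u}. digit a (m + 1 - j) \<noteq> digit b j \<oplus>\<^sub>2 \<tau> j} =
      {j \<in> {1..u}. digit a (m + 1 - j) \<noteq> digit b j \<oplus>\<^sub>2 \<tau> j}"
    and "(\<forall>j\<in>{1..Suc u}. digit a (m + 1 - j) = digit b j \<oplus>\<^sub>2 \<tau> j) =
      (\<forall>j\<in>{1..u}. digit a (m + 1 - j) = digit b j \<oplus>\<^sub>2 \<tau> j)"
    by (auto simp: le_Suc_eq)
  with False show ?thesis
    unfolding jfun_def by (cases u) auto
qed

lemma digit_jfun_eq_mismatch_digit:
  assumes "u \<le> m"
  shows "digit (real k / 2 ^ m) (m + 1 - jfun m u (real k / 2 ^ m) b \<tau>) =
    mismatch_digit (\<lambda>j. digit b j \<oplus>\<^sub>2 \<tau> j) u k"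
  using assms
proof (induction u)
  case 0
  then show ?case
    by (simp add: jfun_def digit_of_nat_div_pow2_Suc)
next
  case (Suc u)
  have "digit (real k / 2 ^ m) (m - u) = nat_bit k u"
    using Suc.prems by (simp add: digit_of_nat_div_pow2)
  with Suc show ?case
    by (cases "nat_bit k u = digit b (Suc u) \<oplus>\<^sub>2 \<tau> (Suc u)") (simp_all add: jfun_Suc)
qed

lemma sum_Qm_star_eq_sum_lessThan:
  fixes F :: "real \<Rightarrow> nat"
  assumes "F 0 = 0"
  shows "(\<Sum>\<alpha>\<in>Qm_star m. F \<alpha>) = (\<Sum>k<2 ^ m. F (real k / 2 ^ m))"
proof -
  have Qm: "Qm m = (\<lambda>k. real k / 2 ^ m) ` {..<2 ^ m}"
    unfolding Qm_def by auto
  have "(\<Sum>\<alpha>\<in>Qm_star m. F \<alpha>) = (\<Sum>\<alpha>\<in>Qm m. F \<alpha>)"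
    using sum.remove[of "Qm m" 0 F] assms unfolding Qm_star_def Qm by force
  also have "\<dots> = (\<Sum>k<2 ^ m. F (real k / 2 ^ m))"
    unfolding Qm by (rule sum.reindex_cong[where l="\<lambda>k. real k / 2 ^ m"]) (auto simp: inj_on_def)
  finally show ?thesis .
qed

lemma digit_zero: "digit 0 i = 0"
  by (simp add: digit_def)

lemma sum_Qm_star_digit_products:
  assumes "u1 < m" and "u2 < m"
  shows "(\<Sum>\<alpha>\<in>Qm_star m.
      (digit \<alpha> (m - u1) \<oplus>\<^sub>2 digit \<alpha> (m + 1 - jfun m u1 \<alpha> \<beta> \<tau>1)) *
      (digit \<alpha> (m - u2) \<oplus>\<^sub>2 digit \<alpha> (m + 1 - jfun m u2 \<alpha> \<beta> \<tau>2))) =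
    (\<Sum>k<2 ^ m.
      (nat_bit k u1 \<oplus>\<^sub>2 mismatch_digit (\<lambda>j. digit \<beta> j \<oplus>\<^sub>2 \<tau>1 j) u1 k) *
      (nat_bit k u2 \<oplus>\<^sub>2 mismatch_digit (\<lambda>j. digit \<beta> j \<oplus>\<^sub>2 \<tau>2 j) u2 k))"
  using assms
  by (subst sum_Qm_star_eq_sum_lessThan)
    (simp_all add: digit_zero bxor_def digit_of_nat_div_pow2 digit_jfun_eq_mismatch_digit[simplified])

theorem lemma3:
  fixes m :: nat and \<sigma> :: "nat \<Rightarrow> nat" and \<beta> :: real
  assumes sigma_bits: "\<forall>j\<in>{1..m}. \<sigma> j \<in> {0, 1}"
    and beta_mbit: "\<beta> \<in> Qm m"
  shows
   "(\<forall>u1 u2. u1 < m \<longrightarrow> u2 < m \<longrightarrow> u1 \<noteq> u2 \<longrightarrow>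
      (\<Sum>\<alpha>\<in>Qm_star m.
         (digit \<alpha> (m - u1) \<oplus>\<^sub>2 digit \<alpha> (m + 1 - jfun m u1 \<alpha> \<beta> \<sigma>)) *
         (digit \<alpha> (m - u2) \<oplus>\<^sub>2 digit \<alpha> (m + 1 - jfun m u2 \<alpha> \<beta> (cshift \<sigma>))))
      = 2 ^ (m - 2))
  \<and> (\<forall>u. u < m \<longrightarrow>
      (\<Sum>\<alpha>\<in>Qm_star m.
         (digit \<alpha> (m - u) \<oplus>\<^sub>2 digit \<alpha> (m + 1 - jfun m u \<alpha> \<beta> \<sigma>)) *
         (digit \<alpha> (m - u) \<oplus>\<^sub>2 digit \<alpha> (m + 1 - jfun m u \<alpha> \<beta> (cshift \<sigma>))))
      = (if u \<le> 1 then 2 ^ (m - u - 1)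
         else 2 ^ (m - u - 1) *
           (1 + (\<Sum>j = 1..u - 1. 2 ^ j *
              (((digit \<beta> j \<oplus>\<^sub>2 \<sigma> j) \<oplus>\<^sub>2 1) * (digit \<beta> u \<oplus>\<^sub>2 \<sigma> u)
               + (digit \<beta> j \<oplus>\<^sub>2 \<sigma> j) * ((digit \<beta> u \<oplus>\<^sub>2 \<sigma> u) \<oplus>\<^sub>2 1))))))"
proof (intro conjI allI impI, goal_cases)
  case (1 u1 u2)
  show ?case
    unfolding sum_Qm_star_digit_products[OF 1(1,2)]
    by (rule sum_bit_bxor_mismatch_distinct[OF 1(3,1,2)])
next
  case (2 u)
  define t where "t = (\<lambda>j. digit \<beta> j \<oplus>\<^sub>2 \<sigma> j)"
  have t: "\<forall>j. t j < 2" and t': "\<forall>j. digit \<beta> j \<oplus>\<^sub>2 cshift \<sigma> j = 1 - t j"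
    by (simp_all add: t_def bxor_less_2 bxor_cshift)
  have summand: "((digit \<beta> j \<oplus>\<^sub>2 \<sigma> j) \<oplus>\<^sub>2 1) * (digit \<beta> u \<oplus>\<^sub>2 \<sigma> u)
      + (digit \<beta> j \<oplus>\<^sub>2 \<sigma> j) * ((digit \<beta> u \<oplus>\<^sub>2 \<sigma> u) \<oplus>\<^sub>2 1) = of_bool (t j \<noteq> t u)" for j
    unfolding t_def by (rule bxor_1_mult_add_mult_bxor_1[OF bxor_less_2 bxor_less_2])
  show ?case
    unfolding sum_Qm_star_digit_products[OF 2 2] sum_bit_bxor_mismatch_same[OF 2]
      t_def[symmetric] count_mismatch_digits_agree[OF t t'] summand
    by simp
qed

end
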